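(* Let $G = H\times N$ be a finite group that is the direct product of subgroups $H$ and $N$, and identify $G/N$ with $H$. Let $i\ge 2$. Then for every $\bar f\in\hat H^{-i}(G,\mathbb{Z})$ and every $\bar\psi\in\hat H^{i}(H,\mathbb{Z})$, $$\bar f\cup \mathrm{Inf}^G_H(\bar\psi) = \mathrm{Cor}^G_H\big(\mathrm{Rsd}^G_H(\bar f)\cup\bar\psi\big)\quad\text{in } \hat H^0(G,\mathbb{Z}),$$ where $\cup$ denotes the cup products $\hat H^{-i}(G,\mathbb{Z})\times\hat H^{i}(G,\mathbb{Z})\to\hat H^0(G,\mathbb{Z})$ and $\hat H^{-i}(H,\mathbb{Z})\times\hat H^{i}(H,\mathbb{Z})\to\hat H^0(H,\mathbb{Z})$, $\mathrm{Inf}^G_H\colon \hat H^i(H,\mathbb{Z})\to\hat H^i(G,\mathbb{Z})$ is inflation via $G\to G/N=H$, and $\mathrm{Cor}^G_H\colon\hat H^0(H,\mathbb{Z})\to\hat H^0(G,\mathbb{Z})$ is corestriction.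
   Context: $\mathbb{Z}$ carries trivial action and $\hat H^j$ denotes Tate cohomology. Tate cohomology of a finite group $G$ with coefficients in $A$ is computed from the complete standard complex $X$: for $j\ge0$, $X_j=\mathbb{Z}[G^{j+1}]$ (diagonal action, usual homogeneous differential); for $j\ge1$, $X_{-j}=\mathrm{Hom}_{\mathbb{Z}}(X_{j-1},\mathbb{Z})$, a free $\mathbb{Z}$-module with basis $(s_1^*,\dots,s_j^* )$, $s_k\in G$, the dual basis element of $(s_1,\dots,s_j)$, with action $g(s_1^*,\dots,s_j^* ) = ((gs_1)^*,\dots,(gs_j)^* )$; and $\hat H^j(G,A)=H^j(\mathrm{Hom}_G(X,A))$. Thus a class in $\hat H^{-i}(G,\mathbb{Z})$ is represented by a $G$-invariant cocycle $f$ on tuples $(s_1^*,\dots,s_i^* )$, $s_k\in G$. The residuation map $\mathrm{Rsd}^G_H\colon \hat H^{-i}(G,\mathbb{Z})\to \hat H^{-i}(H,\mathbb{Z})$ (for $i\ge2$, $G=H\times N$, $G/N\cong H$) is induced on cochains by $$\mathrm{Rsd}(f)(h_1^*,h_2^*,\dots,h_i^* ) = \sum_{n_2,\dots,n_i\in N} f\big(h_1^*,(h_2n_2)^*,\dots,(h_in_i)^*\big),\qquad h_k\in H.$$ (In general, for a normal subgroup $M\lhd G$, residuation $\hat H^{-i}(G,A)\to\hat H^{-i}(G/M,A/I_MA)$ is induced by $(\alpha^*,\alpha_2^*,\dots,\alpha_i^* )\mapsto \sum_{g_kM=\alpha_k,\,k\ge2} f(g^*,g_2^*,\dots,g_i^*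 )+I_MA$ with $g$ any single element of $\alpha$, where $I_M$ is the augmentation ideal of $\mathbb{Z}[M]$.) *)

theory Defs
  imports "HOL-Algebra.Coset"
begin

text \<open>Tate cohomology of a finite group with trivial coefficients in the integers,
computed from the complete standard complex X.  A cochain of degree q is a
G-invariant integer function on tuples: for q \<ge> 0 on (q+1)-tuples (s_0,...,s_q)
(basis of X_q = Z[G^(q+1)]), for q = -j < 0 on j-tuples (s_1,...,s_j) standing for
the dual basis element (s_1^*,...,s_j^*) of X_{-j}.\<close>

definition tuples :: "'a set \<Rightarrow> nat \<Rightarrow> 'a list set" where
  "tuples A n = {xs. set xs \<subseteq> A \<and> length xs = n}"

definition tate_arity :: "int \<Rightarrow> nat" where
  "tate_arity q = (if q \<ge> 0 then nat q + 1 else nat (- q))"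

definition tate_cochain :: "('a, 'b) monoid_scheme \<Rightarrow> int \<Rightarrow> ('a list \<Rightarrow> int) \<Rightarrow> bool" where
  "tate_cochain G q f \<longleftrightarrow>
     (\<forall>g\<in>carrier G. \<forall>xs\<in>tuples (carrier G) (tate_arity q).
        f (map (\<lambda>s. g \<otimes>\<^bsub>G\<^esub> s) xs) = f xs)"

text \<open>Coboundary: (delta f)(x) = f(d_{q+1} x) for a basis element x of X_{q+1}, where
  d_n (s_0..s_n) = sum_k (-1)^k (s_0..omit s_k..s_n)   for n \<ge> 1,
  d_0 (s) = sum_t t^*,
  d_{-j} (s_1^*..s_j^*) = sum_{k=0..j} (-1)^k sum_t (s_1..s_k, t, s_{k+1}..s_j)^*  (dual of d_j).\<close>
definition tate_coboundary :: "('a, 'b) monoid_scheme \<Rightarrow> int \<Rightarrow> ('a list \<Rightarrow> int) \<Rightarrow> 'a list \<Rightarrow> int" where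
  "tate_coboundary G q f xs =
     (if q \<ge> 0 then (\<Sum>k\<in>{0..Suc (nat q)}. (-1) ^ k * f (take k xs @ drop (Suc k) xs))
      else if q = -1 then (\<Sum>t\<in>carrier G. f [t])
      else (\<Sum>k\<in>{0..nat (- q - 1)}. (-1) ^ k * (\<Sum>t\<in>carrier G. f (take k xs @ t # drop k xs))))"

definition tate_cocycle :: "('a, 'b) monoid_scheme \<Rightarrow> int \<Rightarrow> ('a list \<Rightarrow> int) \<Rightarrow> bool" where
  "tate_cocycle G q f \<longleftrightarrow> tate_cochain G q f \<and>
     (\<forall>xs\<in>tuples (carrier G) (tate_arity (q + 1)). tate_coboundary G q f xs = 0)"

definition tate_cohomologous :: "('a, 'b) monoid_scheme \<Rightarrow> int \<Rightarrow> ('a list \<Rightarrow> int) \<Rightarrow> ('a list \<Rightarrow> int) \<Rightarrow> bool" where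
  "tate_cohomologous G q f g \<longleftrightarrow>
     (\<exists>c. tate_cochain G (q - 1) c \<and>
        (\<forall>xs\<in>tuples (carrier G) (tate_arity q). f xs - g xs = tate_coboundary G (q - 1) c xs))"

definition tate_class :: "('a, 'b) monoid_scheme \<Rightarrow> int \<Rightarrow> ('a list \<Rightarrow> int) \<Rightarrow> ('a list \<Rightarrow> int) set" where
  "tate_class G q f = {g. tate_cocycle G q g \<and> tate_cohomologous G q f g}"

text \<open>Cup product of degree (-i) x (i) -> 0 on cochains, via the diagonal component
X_0 -> X_{-i} (x) X_i,  s_0 |-> sum_{t_1..t_i} (t_1^*,...,t_i^*) (x) (t_i,...,t_1,s_0).\<close>
definition tate_cup :: "('a, 'b) monoid_scheme \<Rightarrow> nat \<Rightarrow> ('a list \<Rightarrow> int) \<Rightarrow> ('a list \<Rightarrow> int) \<Rightarrow> 'a list \<Rightarrow> int" where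
  "tate_cup G i f \<psi> xs = (\<Sum>ts\<in>tuples (carrier G) i. f ts * \<psi> (rev ts @ [hd xs]))"

definition dp_proj :: "('a, 'b) monoid_scheme \<Rightarrow> 'a set \<Rightarrow> 'a set \<Rightarrow> 'a \<Rightarrow> 'a" where
  "dp_proj G H N g = (THE h. h \<in> H \<and> (\<exists>n\<in>N. g = h \<otimes>\<^bsub>G\<^esub> n))"

definition tate_inf :: "('a, 'b) monoid_scheme \<Rightarrow> 'a set \<Rightarrow> 'a set \<Rightarrow> ('a list \<Rightarrow> int) \<Rightarrow> 'a list \<Rightarrow> int" where
  "tate_inf G H N \<psi> xs = \<psi> (map (dp_proj G H N) xs)"

definition tate_rsd :: "('a, 'b) monoid_scheme \<Rightarrow> 'a set \<Rightarrow> nat \<Rightarrow> ('a list \<Rightarrow> int) \<Rightarrow> 'a list \<Rightarrow> int" where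
  "tate_rsd G N i f hs =
     (\<Sum>ns\<in>tuples N (i - 1). f (hd hs # map2 (\<lambda>h n. h \<otimes>\<^bsub>G\<^esub> n) (tl hs) ns))"

text \<open>Corestriction in degree 0 (trivial coefficients): induced by the norm
N_{G/H}: Z^H -> Z^G, a |-> sum over the cosets of H of (sigma a) = [G:H] a,
where a degree-0 H-cochain is identified with its (constant) value.\<close>
definition tate_cor0 :: "('a, 'b) monoid_scheme \<Rightarrow> 'a set \<Rightarrow> ('a list \<Rightarrow> int) \<Rightarrow> 'a list \<Rightarrow> int" where
  "tate_cor0 G H \<phi> xs = (\<Sum>C\<in>rcosets\<^bsub>G\<^esub> H. \<phi> [\<one>\<^bsub>G\<^esub>])"

end

theory Submission
  imports Defs "HOL-Algebra.Elementary_Groups"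
begin

(* Let G = H x N be an internal direct product, pi : G -> H the projection and
   i >= 1.  For a degree -i cochain f of G and a degree i cochain psi of H, the
   degree-0 cochain  f cup Inf(psi)  of G is constant; its value at 1 is
     sum over ts in G^i of  f(ts) * psi(pi(rev ts), 1).
   Writing ts = hs * ns with hs in H^i and ns in N^i (coordinatewise), pi(ts) = hs,
   and the inner sum over ns equals |N| * Rsd(f)(hs): translating by the inverse of
   the first N-coordinate (using N-invariance of f and that H and N commute) makes
   the summand independent of that coordinate.  Hence the value is
   |N| * (Rsd(f) cup psi)(1) = [G:H] * (Rsd(f) cup psi)(1), which is the
   corestriction.  The identity even holds for cochains, pointwise on G. *)

lemma finite_tuples: "finite A \<Longrightarrow> finite (tuples A n)"
  unfolding tuples_def by (rule finite_lists_length_eq)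

lemma sum_tuples_Suc:
  assumes "finite A"
  shows "(\<Sum>xs\<in>tuples A (Suc n). F xs) = (\<Sum>x\<in>A. \<Sum>xs\<in>tuples A n. F (x # xs))"
proof -
  have tuples_Suc: "tuples A (Suc n) = (\<lambda>(x, xs). x # xs) ` (A \<times> tuples A n)"
    unfolding tuples_def by (auto simp: length_Suc_conv image_iff)
  have "inj_on (\<lambda>(x, xs). x # xs) (A \<times> tuples A n)"
    by (auto simp: inj_on_def)
  then show ?thesis
    unfolding tuples_Suc
    by (simp add: sum.reindex sum.cartesian_product assms finite_tuples split_def)
qed

lemma bij_betw_map_tuples:
  assumes "bij_betw \<phi> A B"
  shows "bij_betw (map \<phi>) (tuples A n) (tuples B n)"
proof (rule bij_betw_byWitness[where f' = "map (inv_into A \<phi>)"])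
  show "\<forall>xs\<in>tuples A n. map (inv_into A \<phi>) (map \<phi> xs) = xs"
    using assms by (auto simp: tuples_def intro!: map_idI bij_betw_inv_into_left)
  show "\<forall>ys\<in>tuples B n. map \<phi> (map (inv_into A \<phi>) ys) = ys"
    using assms by (auto simp: tuples_def intro!: map_idI bij_betw_inv_into_right)
  have maps_into: "map \<chi> ` tuples C n \<subseteq> tuples D n" if "bij_betw \<chi> C D" for \<chi> C D
    using that by (fastforce simp: tuples_def bij_betw_def)
  show "map \<phi> ` tuples A n \<subseteq> tuples B n"
    using maps_into[OF assms] .
  show "map (inv_into A \<phi>) ` tuples B n \<subseteq> tuples A n"
    using maps_into[OF bij_betw_inv_into[OF assms]] .
qed

lemma sum_tuples_reindex:
  assumes "bij_betw \<phi> A B"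
  shows "(\<Sum>xs\<in>tuples A n. F (map \<phi> xs)) = (\<Sum>ys\<in>tuples B n. F ys)"
  using sum.reindex_bij_betw[OF bij_betw_map_tuples[OF assms]] .

lemma tate_class_0_cong:
  assumes "\<And>x. x \<in> carrier G \<Longrightarrow> a [x] = b [x]"
  shows "tate_class G 0 a = tate_class G 0 b"
proof -
  have "tuples (carrier G) (tate_arity 0) = (\<lambda>x. [x]) ` carrier G"
    by (auto simp: tuples_def tate_arity_def length_Suc_conv)
  then have "tate_cohomologous G 0 a = tate_cohomologous G 0 b"
    using assms by (auto simp: tate_cohomologous_def)
  then show ?thesis unfolding tate_class_def by simp
qed

lemma (in group) bij_betw_mult_left:
  assumes "subgroup K G" and "a \<in> K"
  shows "bij_betw (\<lambda>x. a \<otimes> x) K K"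
proof (rule bij_betw_byWitness[where f' = "\<lambda>x. inv a \<otimes> x"])
  have "K \<subseteq> carrier G" "a \<in> carrier G"
    using assms subgroup.subset by blast+
  then show "\<forall>x\<in>K. inv a \<otimes> (a \<otimes> x) = x" "\<forall>x\<in>K. a \<otimes> (inv a \<otimes> x) = x"
    by (auto simp: m_assoc[symmetric])
  show "(\<lambda>x. a \<otimes> x) ` K \<subseteq> K" "(\<lambda>x. inv a \<otimes> x) ` K \<subseteq> K"
    using assms by (auto intro: subgroup.m_closed subgroup.m_inv_closed)
qed

(* The degree-0 cup product of G-invariant cochains is constant on G: translating
   the summation variable by x moves the evaluation point x to 1. *)
lemma (in group) tate_cup_0_const:
  assumes "0 < i"
    and f: "tate_cochain G (- int i) f" and \<phi>: "tate_cochain G (int i) \<phi>"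
    and x: "x \<in> carrier G"
  shows "tate_cup G i f \<phi> [x] = tate_cup G i f \<phi> [\<one>]"
proof -
  have f_inv: "f (map (\<lambda>s. x \<otimes> s) ts) = f ts" if "ts \<in> tuples (carrier G) i" for ts
    using f x that \<open>0 < i\<close> by (simp add: tate_cochain_def tate_arity_def)
  have \<phi>_inv: "\<phi> (map (\<lambda>s. x \<otimes> s) (rev ts) @ [x]) = \<phi> (rev ts @ [\<one>])"
    if "ts \<in> tuples (carrier G) i" for ts
  proof -
    have "rev ts @ [\<one>] \<in> tuples (carrier G) (tate_arity (int i))"
      using that by (simp add: tuples_def tate_arity_def)
    then have "\<phi> (map (\<lambda>s. x \<otimes> s) (rev ts @ [\<one>])) = \<phi> (rev ts @ [\<one>])"
      using \<phi> x by (simp only: tate_cochain_def)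
    then show ?thesis using x by simp
  qed
  have "tate_cup G i f \<phi> [x]
      = (\<Sum>ts\<in>tuples (carrier G) i. f (map (\<lambda>s. x \<otimes> s) ts) * \<phi> (rev (map (\<lambda>s. x \<otimes> s) ts) @ [x]))"
    unfolding tate_cup_def list.sel(1)
    by (rule sum_tuples_reindex[OF bij_betw_mult_left[OF subgroup_self x], symmetric])
  also have "\<dots> = (\<Sum>ts\<in>tuples (carrier G) i. f ts * \<phi> (rev ts @ [\<one>]))"
    using x f_inv \<phi>_inv by (intro sum.cong) (simp_all add: rev_map)
  also have "\<dots> = tate_cup G i f \<phi> [\<one>]"
    unfolding tate_cup_def by simp
  finally show ?thesis .
qed

locale internal_direct_product = group G for G (structure) +
  fixes H N :: "'a set"
  assumes H_normal: "H \<lhd> G" and N_normal: "N \<lhd> G"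
    and trivial_intersection: "H \<inter> N = {\<one>}" and product: "H <#> N = carrier G"
begin

lemma H_subgroup: "subgroup H G" and N_subgroup: "subgroup N G"
  using H_normal N_normal normal_imp_subgroup by blast+

lemma H_carrier: "H \<subseteq> carrier G" and N_carrier: "N \<subseteq> carrier G"
  using H_subgroup N_subgroup subgroup.subset by blast+

lemma commute: "h \<in> H \<Longrightarrow> n \<in> N \<Longrightarrow> h \<otimes> n = n \<otimes> h"
  using normal_imp_commuting[OF H_normal N_normal] trivial_intersection by blast

lemma mult_bij: "bij_betw (\<lambda>(h, n). h \<otimes> n) (H \<times> N) (carrier G)"
proof -
  have "(\<lambda>(h, n). h \<otimes> n) \<in> iso (subgroup_generated G H \<times>\<times> subgroup_generated G N) G"
    using iso_group_mul_gen[OF H_normal N_normal] trivial_intersection product by simp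
  then show ?thesis
    by (simp add: iso_def DirProd_def subgroup.carrier_subgroup_generated_subgroup
        H_subgroup N_subgroup)
qed

lemma decompose:
  assumes "g \<in> carrier G"
  obtains h n where "h \<in> H" "n \<in> N" "g = h \<otimes> n"
  using assms bij_betw_imp_surj_on[OF mult_bij] by force

lemma decompose_unique:
  assumes "h \<in> H" "n \<in> N" "h' \<in> H" "n' \<in> N" "h \<otimes> n = h' \<otimes> n'"
  shows "h = h'"
  using assms bij_betw_imp_inj_on[OF mult_bij] by (auto simp: inj_on_def)

lemma proj_mult: "h \<in> H \<Longrightarrow> n \<in> N \<Longrightarrow> dp_proj G H N (h \<otimes> n) = h"
  unfolding dp_proj_def by (rule the_equality) (auto dest: decompose_unique)

lemma proj_one: "dp_proj G H N \<one> = \<one>"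
  using proj_mult[OF subgroup.one_closed[OF H_subgroup] subgroup.one_closed[OF N_subgroup]]
  by simp

(* The projection is a homomorphism G -> H; this makes inflation G-invariant. *)
lemma proj_hom: "dp_proj G H N \<in> hom G (G\<lparr>carrier := H\<rparr>)"
proof (rule homI)
  fix x assume "x \<in> carrier G"
  then show "dp_proj G H N x \<in> carrier (G\<lparr>carrier := H\<rparr>)"
    by (auto elim: decompose simp: proj_mult)
next
  fix x y assume "x \<in> carrier G" "y \<in> carrier G"
  then obtain h n h' n' where hn: "h \<in> H" "n \<in> N" "x = h \<otimes> n"
    and hn': "h' \<in> H" "n' \<in> N" "y = h' \<otimes> n'"
    by (metis decompose)
  have carrier: "h \<in> carrier G" "n \<in> carrier G" "h' \<in> carrier G" "n' \<in> carrier G"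
    using hn hn' H_carrier N_carrier by auto
  have "x \<otimes> y = h \<otimes> (n \<otimes> h') \<otimes> n'"
    using hn hn' carrier by (simp add: m_assoc)
  also have "\<dots> = (h \<otimes> h') \<otimes> (n \<otimes> n')"
    using carrier by (subst commute[OF hn'(1) hn(2), symmetric]) (simp add: m_assoc)
  finally have "x \<otimes> y = (h \<otimes> h') \<otimes> (n \<otimes> n')" .
  then show "dp_proj G H N (x \<otimes> y) = dp_proj G H N x \<otimes>\<^bsub>G\<lparr>carrier := H\<rparr>\<^esub> dp_proj G H N y"
    using hn hn' H_subgroup N_subgroup by (simp add: proj_mult subgroup.m_closed)
qed

lemma sum_carrier_decompose:
  "(\<Sum>g\<in>carrier G. F g) = (\<Sum>h\<in>H. \<Sum>n\<in>N. F (h \<otimes> n))"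
  using sum.reindex_bij_betw[OF mult_bij, of F]
  by (simp add: sum.cartesian_product split_def)

lemma sum_tuples_decompose:
  assumes "finite (carrier G)"
  shows "(\<Sum>ts\<in>tuples (carrier G) m. F ts)
       = (\<Sum>hs\<in>tuples H m. \<Sum>ns\<in>tuples N m. F (map2 (\<otimes>) hs ns))"
proof (induction m arbitrary: F)
  case 0
  have "tuples A 0 = {[]}" for A :: "'a set" by (auto simp: tuples_def)
  then show ?case by simp
next
  case (Suc m)
  have fin: "finite H" "finite N"
    using assms H_carrier N_carrier finite_subset by blast+
  have "(\<Sum>ts\<in>tuples (carrier G) (Suc m). F ts)
      = (\<Sum>h\<in>H. \<Sum>n\<in>N. \<Sum>hs\<in>tuples H m. \<Sum>ns\<in>tuples N m. F ((h \<otimes> n) # map2 (\<otimes>) hs ns))"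
    by (simp add: sum_tuples_Suc[OF assms] Suc.IH sum_carrier_decompose)
  also have "\<dots> = (\<Sum>h\<in>H. \<Sum>hs\<in>tuples H m. \<Sum>n\<in>N. \<Sum>ns\<in>tuples N m. F ((h \<otimes> n) # map2 (\<otimes>) hs ns))"
    by (rule sum.cong[OF refl], rule sum.swap)
  also have "\<dots> = (\<Sum>hs\<in>tuples H (Suc m). \<Sum>ns\<in>tuples N (Suc m). F (map2 (\<otimes>) hs ns))"
    by (simp add: sum_tuples_Suc[OF fin(1)] sum_tuples_Suc[OF fin(2)])
  finally show ?case .
qed

lemma card_rcosets:
  assumes "finite (carrier G)"
  shows "card (rcosets H) = card N"
proof -
  have "card (rcosets H) * card H = card H * card N"
    using lagrange[OF H_subgroup] bij_betw_same_card[OF mult_bij]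
    by (simp add: order_def card_cartesian_product)
  moreover have "card H > 0"
    using assms H_carrier subgroup.one_closed[OF H_subgroup] card_gt_0_iff finite_subset by blast
  ultimately show ?thesis by simp
qed

lemma map2_mult_in_tuples:
  assumes "set hs \<subseteq> carrier G" "set ns \<subseteq> carrier G" "length hs = length ns"
  shows "map2 (\<otimes>) hs ns \<in> tuples (carrier G) (length hs)"
  using assms by (fastforce simp: tuples_def dest: set_zip_leftD set_zip_rightD)

lemma map2_mult_shift:
  assumes "a \<in> N" "set hs \<subseteq> H" "set ns \<subseteq> N"
  shows "map (\<lambda>x. a \<otimes> x) (map2 (\<otimes>) hs ns) = map2 (\<otimes>) hs (map (\<lambda>x. a \<otimes> x) ns)"
  using assms(2,3)
proof (induction hs arbitrary: ns)
  case (Cons h hs)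
  show ?case
  proof (cases ns)
    case (Cons n ns')
    have carrier: "a \<in> carrier G" "h \<in> carrier G" "n \<in> carrier G"
      using Cons.prems \<open>ns = n # ns'\<close> assms(1) H_carrier N_carrier by auto
    have "a \<otimes> (h \<otimes> n) = (h \<otimes> a) \<otimes> n"
      using Cons.prems assms(1) carrier by (simp add: commute m_assoc[symmetric])
    also have "\<dots> = h \<otimes> (a \<otimes> n)"
      using carrier by (simp add: m_assoc)
    finally have "a \<otimes> (h \<otimes> n) = h \<otimes> (a \<otimes> n)" .
    then show ?thesis using Cons.IH Cons.prems \<open>ns = n # ns'\<close> by simp
  qed simp
qed simp

(* Key step: for an N-invariant f, summing over all N-components of (h,hs)*ns
   gives |N| times the residuation sum, where the first N-component is 1.
   Translating by the inverse of the first N-component n makes it disappear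
   and reindexes the remaining ones. *)
lemma sum_N_tuples_residuation:
  assumes "finite (carrier G)"
    and f_inv: "\<And>a xs. a \<in> N \<Longrightarrow> xs \<in> tuples (carrier G) (Suc m) \<Longrightarrow> f (map (\<lambda>s. a \<otimes> s) xs) = f xs"
    and hs: "h \<in> H" "set hs \<subseteq> H" "length hs = m"
  shows "(\<Sum>ns\<in>tuples N (Suc m). f (map2 (\<otimes>) (h # hs) ns))
       = int (card N) * (\<Sum>ns\<in>tuples N m. f (h # map2 (\<otimes>) hs ns))"
proof -
  have translate: "f ((h \<otimes> n) # map2 (\<otimes>) hs ns) = f (h # map2 (\<otimes>) hs (map (\<lambda>x. inv n \<otimes> x) ns))"
    if n: "n \<in> N" and ns: "ns \<in> tuples N m" for n ns
  proof -
    have inv_n: "inv n \<in> N" by (rule subgroup.m_inv_closed[OF N_subgroup n])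
    have "(h \<otimes> n) # map2 (\<otimes>) hs ns \<in> tuples (carrier G) (Suc m)"
      using map2_mult_in_tuples[of "h # hs" "n # ns"] hs n ns H_carrier N_carrier
      by (auto simp: tuples_def)
    then have "f ((h \<otimes> n) # map2 (\<otimes>) hs ns) = f (map (\<lambda>s. inv n \<otimes> s) ((h \<otimes> n) # map2 (\<otimes>) hs ns))"
      by (rule f_inv[OF inv_n, symmetric])
    also have "\<dots> = f (map2 (\<otimes>) (h # hs) (map (\<lambda>x. inv n \<otimes> x) (n # ns)))"
      using map2_mult_shift[OF inv_n, of "h # hs" "n # ns"] hs n ns by (simp add: tuples_def)
    also have "\<dots> = f (h # map2 (\<otimes>) hs (map (\<lambda>x. inv n \<otimes> x) ns))"
      using n hs H_carrier N_carrier by (simp add: subsetD)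
    finally show ?thesis .
  qed
  have "finite N" by (rule finite_subset[OF N_carrier assms(1)])
  then have "(\<Sum>ns\<in>tuples N (Suc m). f (map2 (\<otimes>) (h # hs) ns))
      = (\<Sum>n\<in>N. \<Sum>ns\<in>tuples N m. f (h # map2 (\<otimes>) hs (map (\<lambda>x. inv n \<otimes> x) ns)))"
    by (simp add: sum_tuples_Suc translate cong: sum.cong)
  also have "\<dots> = (\<Sum>n\<in>N. \<Sum>ns\<in>tuples N m. f (h # map2 (\<otimes>) hs ns))"
  proof (rule sum.cong[OF refl])
    fix n assume "n \<in> N"
    then have "bij_betw (\<lambda>x. inv n \<otimes> x) N N"
      using N_subgroup by (simp add: bij_betw_mult_left subgroup.m_inv_closed)
    then show "(\<Sum>ns\<in>tuples N m. f (h # map2 (\<otimes>) hs (map (\<lambda>x. inv n \<otimes> x) ns)))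
        = (\<Sum>ns\<in>tuples N m. f (h # map2 (\<otimes>) hs ns))"
      by (rule sum_tuples_reindex[where F = "\<lambda>ns. f (h # map2 (\<otimes>) hs ns)"])
  qed
  also have "\<dots> = int (card N) * (\<Sum>ns\<in>tuples N m. f (h # map2 (\<otimes>) hs ns))"
    by simp
  finally show ?thesis .
qed

lemma proj_map2:
  assumes "set hs \<subseteq> H" "set ns \<subseteq> N" "length hs = length ns"
  shows "map (dp_proj G H N) (map2 (\<otimes>) hs ns) = hs"
  using assms
proof (induction hs arbitrary: ns)
  case (Cons h hs)
  then obtain n ns' where "ns = n # ns'" by (cases ns) auto
  then show ?case using Cons by (simp add: proj_mult)
qed simp

lemma tate_inf_cochain:
  assumes \<psi>: "tate_cochain (G\<lparr>carrier := H\<rparr>) (int i) \<psi>"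
  shows "tate_cochain G (int i) (tate_inf G H N \<psi>)"
  unfolding tate_cochain_def
proof (intro ballI)
  fix g xs assume g: "g \<in> carrier G" and xs: "xs \<in> tuples (carrier G) (tate_arity (int i))"
  let ?\<pi> = "dp_proj G H N"
  have hom: "map ?\<pi> (map (\<lambda>s. g \<otimes> s) xs) = map (\<lambda>s. ?\<pi> g \<otimes> s) (map ?\<pi> xs)"
    using g xs hom_mult[OF proj_hom] by (auto simp: tuples_def)
  have "?\<pi> g \<in> H" "map ?\<pi> xs \<in> tuples H (tate_arity (int i))"
    using g xs hom_in_carrier[OF proj_hom] by (auto simp: tuples_def)
  then have "\<psi> (map (\<lambda>s. ?\<pi> g \<otimes> s) (map ?\<pi> xs)) = \<psi> (map ?\<pi> xs)"
    using \<psi> unfolding tate_cochain_def by (simp del: map_map)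
  then show "tate_inf G H N \<psi> (map (\<lambda>s. g \<otimes> s) xs) = tate_inf G H N \<psi> xs"
    unfolding tate_inf_def hom .
qed

lemma cup_inf_at_one:
  assumes fin: "finite (carrier G)" and "0 < i" and f: "tate_cochain G (- int i) f"
  shows "tate_cup G i f (tate_inf G H N \<psi>) [\<one>]
       = int (card N) * tate_cup (G\<lparr>carrier := H\<rparr>) i (tate_rsd G N i f) \<psi> [\<one>]"
proof -
  obtain m where i: "i = Suc m" using \<open>0 < i\<close> gr0_conv_Suc by blast
  have "tate_arity (- int i) = Suc m" using i by (simp add: tate_arity_def)
  then have f_inv: "f (map (\<lambda>s. a \<otimes> s) xs) = f xs"
    if "a \<in> N" "xs \<in> tuples (carrier G) (Suc m)" for a xs
    using f that N_carrier by (auto simp: tate_cochain_def)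
  have residuation: "(\<Sum>ns\<in>tuples N i. f (map2 (\<otimes>) hs ns)) = int (card N) * tate_rsd G N i f hs"
    if hs: "hs \<in> tuples H i" for hs
  proof -
    obtain h hs' where "hs = h # hs'" "h \<in> H" "set hs' \<subseteq> H" "length hs' = m"
      using hs i by (cases hs) (auto simp: tuples_def)
    then show ?thesis
      unfolding tate_rsd_def i using sum_N_tuples_residuation[OF fin f_inv] by simp
  qed
  have "tate_cup G i f (tate_inf G H N \<psi>) [\<one>]
      = (\<Sum>hs\<in>tuples H i. \<Sum>ns\<in>tuples N i.
           f (map2 (\<otimes>) hs ns) * \<psi> (rev (map (dp_proj G H N) (map2 (\<otimes>) hs ns)) @ [\<one>]))"
    by (simp add: tate_cup_def tate_inf_def sum_tuples_decompose[OF fin] proj_one rev_map)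
  also have "\<dots> = (\<Sum>hs\<in>tuples H i. (\<Sum>ns\<in>tuples N i. f (map2 (\<otimes>) hs ns)) * \<psi> (rev hs @ [\<one>]))"
  proof (rule sum.cong[OF refl])
    fix hs assume hs: "hs \<in> tuples H i"
    have "map (dp_proj G H N) (map2 (\<otimes>) hs ns) = hs" if "ns \<in> tuples N i" for ns
      using proj_map2 hs that by (simp add: tuples_def)
    then show "(\<Sum>ns\<in>tuples N i.
          f (map2 (\<otimes>) hs ns) * \<psi> (rev (map (dp_proj G H N) (map2 (\<otimes>) hs ns)) @ [\<one>]))
        = (\<Sum>ns\<in>tuples N i. f (map2 (\<otimes>) hs ns)) * \<psi> (rev hs @ [\<one>])"
      by (simp add: sum_distrib_right cong: sum.cong)
  qed
  also have "\<dots> = int (card N) * tate_cup (G\<lparr>carrier := H\<rparr>) i (tate_rsd G N i f) \<psi> [\<one>]"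
    by (simp add: tate_cup_def residuation sum_distrib_left mult.assoc cong: sum.cong)
  finally show ?thesis .
qed

end

theorem lemma5:
  fixes G :: "('a, 'b) monoid_scheme" and H N :: "'a set" and i :: nat
    and f \<psi> :: "'a list \<Rightarrow> int"
  assumes "group G" and "finite (carrier G)"
    and "H \<lhd> G" and "N \<lhd> G" and "H \<inter> N = {\<one>\<^bsub>G\<^esub>}" and "H <#>\<^bsub>G\<^esub> N = carrier G"
    and "i \<ge> 2"
    and "tate_cocycle G (- int i) f"
    and "tate_cocycle (G\<lparr>carrier := H\<rparr>) (int i) \<psi>"
  shows "tate_class G 0 (tate_cup G i f (tate_inf G H N \<psi>)) =
         tate_class G 0 (tate_cor0 G H (tate_cup (G\<lparr>carrier := H\<rparr>) i (tate_rsd G N i f) \<psi>))"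
proof (rule tate_class_0_cong)
  interpret internal_direct_product G H N
    using assms(1,3-6) by (simp add: internal_direct_product_def internal_direct_product_axioms_def)
  have fin: "finite (carrier G)" and i: "0 < i" using assms(2,7) by auto
  have f: "tate_cochain G (- int i) f"
    using assms(8) by (simp add: tate_cocycle_def)
  have inf: "tate_cochain G (int i) (tate_inf G H N \<psi>)"
    using assms(9) by (simp add: tate_cocycle_def tate_inf_cochain)
  fix x assume x: "x \<in> carrier G"
  have "tate_cup G i f (tate_inf G H N \<psi>) [x] = tate_cup G i f (tate_inf G H N \<psi>) [\<one>\<^bsub>G\<^esub>]"
    by (rule tate_cup_0_const[OF i f inf x])
  also have "\<dots> = int (card N) * tate_cup (G\<lparr>carrier := H\<rparr>) i (tate_rsd G N i f) \<psi> [\<one>\<^bsub>G\<^esub>]"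
    by (rule cup_inf_at_one[OF fin i f])
  also have "\<dots> = tate_cor0 G H (tate_cup (G\<lparr>carrier := H\<rparr>) i (tate_rsd G N i f) \<psi>) [x]"
    by (simp add: tate_cor0_def card_rcosets[OF fin])
  finally show "tate_cup G i f (tate_inf G H N \<psi>) [x]
      = tate_cor0 G H (tate_cup (G\<lparr>carrier := H\<rparr>) i (tate_rsd G N i f) \<psi>) [x]" .
qed

end
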